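(* Let $A\in\mathbb{R}^{n\times n}$, $B\in\mathbb{R}^{n\times m}$ and consider the system $x^+=Ax+Bu+d$ with disturbance $d\in\mathcal{D}$, where $\mathcal{D}:=\{\sum_{i=1}^{n_d}\alpha_i d^{(i)}:\mathbf{1}^\top\alpha=1,\ \alpha\ge0\}$ is a polyhedral C-set with vertices $d^{(1)},\dots,d^{(n_d)}\in\mathbb{R}^n$. Let $\mathrm{S}\in\mathbb{R}^{n_s\times n}$ be such that $\mathcal{S}:=\{x:\mathrm{S}x\le\mathbf{1}\}$ is a C-set, and $\mathrm{U}\in\mathbb{R}^{n_u\times m}$ with $\mathcal{U}:=\{u:\mathrm{U}u\le\mathbf{1}\}$ (a polyhedral convex set containing the origin in its interior). Let $u_d(0),\dots,u_d(T-1)$ be inputs, $d_d(0),\dots,d_d(T-1)\in\mathcal{D}$ (unknown) disturbances, and $x_d(0),\dots,x_d(T)$ states with $x_d(k+1)=Ax_d(k)+Bu_d(k)+d_d(k)$; set $U_{0,T}:=[u_d(0)\ \cdots\ u_d(T-1)]$, $X_{0,T}:=[x_d(0)\ \cdots\ x_d(T-1)]$, $X_{1,T}:=[x_d(1)\ \cdots\ x_d(T)]$. For $j\in\{1,\dots,T\}$ and $i\in\{1,\dots,n_d\}$ let $\delta_{ji}\in\mathbb{R}^{n\times T}$ be the matrix whose $j$-th column is $T d^{(i)}$ and all other columns are zero. If there exists $G_K\in\mathbb{R}^{T\times n}$ such that $\mathrm{S}\big((X_{1,T}-\delta_{ji})G_Ks+w\big)\le\mathbf{1}$ for all vertices $s$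 of $\mathcal{S}$, all vertices $w$ of $\mathcal{D}$, all $j\in\{1,\dots,T\}$ and all $i\in\{1,\dots,n_d\}$; $\;\mathrm{U}U_{0,T}G_Ks\le\mathbf{1}$ for all vertices $s$ of $\mathcal{S}$; and $I_n=X_{0,T}G_K$, then the state-feedback gain $K=U_{0,T}G_K$ is such that $\mathcal{S}$ is robustly invariant with respect to $\mathcal{D}$ for $x^+=(A+BK)x+d$ and $\mathcal{S}$ is admissible for $\mathcal{U}$.
   Context: $\mathbf{1}$ denotes the vector of all ones of appropriate dimension; inequalities between vectors/matrices are entrywise. A C-set is a convex compact subset of $\mathbb{R}^n$ containing the origin as an interior point. A set $\mathcal{S}$ is robustly invariant with respect to $\mathcal{D}$ for $x^+=Fx+d$ if for every initial condition $x(0)\in\mathcal{S}$ and every disturbance sequence with $d(t)\in\mathcal{D}$ for all $t\ge0$, the resulting solution satisfies $x(t)\in\mathcal{S}$ for all $t\ge0$. $\mathcal{S}$ is admissible for $\mathcal{U}$ (with gain $K$) if $Kx\in\mathcal{U}$ for every $x\in\mathcal{S}$. *)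

theory Defs
  imports "HOL-Analysis.Analysis"
begin

definition C_set :: "'a::euclidean_space set \<Rightarrow> bool" where
  "C_set X \<longleftrightarrow> convex X \<and> compact X \<and> 0 \<in> interior X"

fun traj :: "real^'n^'n \<Rightarrow> real^'n \<Rightarrow> (nat \<Rightarrow> real^'n) \<Rightarrow> nat \<Rightarrow> real^'n" where
  "traj F x0 d 0 = x0"
| "traj F x0 d (Suc t) = F *v traj F x0 d t + d t"

definition robustly_invariant :: "real^'n^'n \<Rightarrow> (real^'n) set \<Rightarrow> (real^'n) set \<Rightarrow> bool" where
  "robustly_invariant F Dset Sset \<longleftrightarrow>
     (\<forall>x0 d. x0 \<in> Sset \<longrightarrow> (\<forall>t. d t \<in> Dset) \<longrightarrow> (\<forall>t. traj F x0 d t \<in> Sset))"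

definition admissible :: "real^'n^'m \<Rightarrow> (real^'n) set \<Rightarrow> (real^'m) set \<Rightarrow> bool" where
  "admissible K Sset Uset \<longleftrightarrow> (\<forall>x\<in>Sset. K *v x \<in> Uset)"

end

(* Let D_{0,T} be the matrix of the unknown disturbances d_d(0), ..., d_d(T-1). The data
   equation X_{1,T} = A X_{0,T} + B U_{0,T} + D_{0,T} and X_{0,T} G_K = I give
   A + BK = (X_{1,T} - D_{0,T}) G_K. Every column of D_{0,T} lies in D = conv{d^(i)}, and
   D_{0,T} is the average over j of the matrices carrying T times its j-th column in column j,
   so D_{0,T} lies in the convex hull of the delta_ji. The constraint
   S((X_{1,T} - Delta) G_K x + w) <= 1 is affine in each of Delta, x and w separately, so by
   Krein-Milman it holds for Delta = D_{0,T}, all x in S and all w in D once it holds at the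
   delta_ji and at the vertices of S and D; this is one step of robust invariance.
   Admissibility follows in the same way from the vertices of S. *)

theory Submission
  imports Defs
begin

lemma convex_affine_le:
  fixes b :: "real^'k"
  assumes "linear L"
  shows "convex {x. L x + c \<le> b}"
proof -
  have "{x. L x + c \<le> b} = L -` {..b - c}"
    by (auto simp: le_diff_eq)
  then show ?thesis
    using convex_linear_vimage[OF assms, of "{..b - c}"] by (simp add: is_interval_convex)
qed

lemma affine_le_if_le_on_extreme_points:
  fixes S :: "'a::euclidean_space set" and b :: "real^'k"
  assumes "compact S" "convex S" "linear L"
    and "\<And>x. x extreme_point_of S \<Longrightarrow> L x + c \<le> b" and "x \<in> S"
  shows "L x + c \<le> b"
proof -
  have "convex hull {x. x extreme_point_of S} \<subseteq> {x. L x + c \<le> b}"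
    using assms(4) by (intro hull_minimal convex_affine_le[OF assms(3)]) auto
  then show ?thesis
    using Krein_Milman_Minkowski[OF assms(1,2)] assms(5) by auto
qed

lemma affine_le_if_le_on_extreme_points2:
  fixes S :: "'a::euclidean_space set" and D :: "'b::euclidean_space set" and b :: "real^'k"
  assumes "compact S" "convex S" "compact D" "convex D" "linear L" "linear M"
    and "\<And>x w. x extreme_point_of S \<Longrightarrow> w extreme_point_of D \<Longrightarrow> L x + M w + c \<le> b"
    and "x \<in> S" "w \<in> D"
  shows "L x + M w + c \<le> b"
proof -
  have "M w + (L x' + c) \<le> b" if "x' extreme_point_of S" for x'
    using affine_le_if_le_on_extreme_points[OF assms(3,4,6) _ assms(9), of "L x' + c" b]
      assms(7)[OF that] by (simp add: add_ac)
  then have "L x + (M w + c) \<le> b"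
    using affine_le_if_le_on_extreme_points[OF assms(1,2,5) _ assms(8), of "M w + c" b]
    by (simp add: add_ac)
  then show ?thesis by (simp add: add_ac)
qed

lemma convex_matrix_perturbation_le:
  fixes S :: "real^'n^'s" and b :: "real^'s"
  shows "convex {\<Delta>. S *v ((X - \<Delta>) *v g + w) \<le> b}"
proof -
  have "linear (\<lambda>\<Delta>. - (S *v (\<Delta> *v g)))"
    by (rule linearI) (simp_all add: matrix_vector_mult_add_rdistrib matrix_vector_right_distrib
        matrix_vector_mult_scaleR flip: scaleR_matrix_vector_assoc)
  then have "convex {\<Delta>. - (S *v (\<Delta> *v g)) + S *v (X *v g + w) \<le> b}"
    by (rule convex_affine_le)
  then show ?thesis
    by (simp add: matrix_vector_mult_diff_rdistrib matrix_vector_right_distrib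
        matrix_vector_mult_diff_distrib diff_add_eq)
qed

lemma matrix_perturbation_le_from_vertices:
  fixes S :: "real^'n^'s" and G :: "real^'n^'t" and b :: "real^'s"
  assumes "compact X" "convex X" "compact D" "convex D"
    and "\<And>x w \<Delta>. x extreme_point_of X \<Longrightarrow> w extreme_point_of D \<Longrightarrow> \<Delta> \<in> P \<Longrightarrow>
           S *v ((Y - \<Delta>) *v (G *v x) + w) \<le> b"
    and "\<Delta> \<in> convex hull P" "x \<in> X" "w \<in> D"
  shows "S *v ((Y - \<Delta>) *v (G *v x) + w) \<le> b"
proof -
  have "S *v ((Y - \<Delta>') *v (G *v x) + w) \<le> b" if "\<Delta>' \<in> P" for \<Delta>'
    using affine_le_if_le_on_extreme_points2[OF assms(1-4) matrix_vector_mul_linear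
        matrix_vector_mul_linear _ assms(7,8), of "S ** (Y - \<Delta>') ** G" S 0 b] assms(5)[OF _ _ that]
    by (simp add: matrix_vector_right_distrib matrix_vector_mul_assoc matrix_mul_assoc)
  then have "convex hull P \<subseteq> {\<Delta>. S *v ((Y - \<Delta>) *v (G *v x) + w) \<le> b}"
    by (intro hull_minimal convex_matrix_perturbation_le) auto
  then show ?thesis
    using assms(6) by blast
qed

definition column_matrix :: "'t::finite \<Rightarrow> real^'n \<Rightarrow> real^'t^'n" where
  "column_matrix j v = (\<chi> r j'. if j' = j then v $ r else 0)"

lemma linear_column_matrix: "linear (column_matrix j)"
  by (rule linearI) (simp_all add: column_matrix_def vec_eq_iff)

lemma sum_column_matrix_columns: "(\<Sum>j\<in>UNIV. column_matrix j (column j M)) = M"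
  by (simp add: vec_eq_iff column_matrix_def column_def if_distrib[of "\<lambda>y. y $ _"] cong: if_cong)

lemma matrix_in_convex_hull_column_matrices:
  fixes M :: "real^'t::finite^'n"
  assumes "\<And>j. column j M \<in> convex hull V"
  shows "M \<in> convex hull {column_matrix j (real CARD('t) *\<^sub>R v) | j v. v \<in> V}"
    (is "_ \<in> convex hull ?P")
proof -
  have "column_matrix j (real CARD('t) *\<^sub>R column j M) \<in> convex hull ?P" for j
  proof -
    have "column_matrix j (real CARD('t) *\<^sub>R column j M)
            \<in> (column_matrix j \<circ> scaleR (real CARD('t))) ` (convex hull V)"
      using assms by auto
    also have "\<dots> = convex hull ((column_matrix j \<circ> scaleR (real CARD('t))) ` V)"
      by (intro convex_hull_linear_image linear_compose linear_column_matrix linear_scaleR)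
    also have "\<dots> \<subseteq> convex hull ?P"
      by (intro hull_mono) auto
    finally show ?thesis .
  qed
  then have "(\<Sum>j\<in>UNIV. (1 / CARD('t)) *\<^sub>R column_matrix j (real CARD('t) *\<^sub>R column j M))
               \<in> convex hull ?P"
    by (intro convex_sum convex_convex_hull) auto
  moreover have "(\<Sum>j\<in>UNIV. (1 / CARD('t)) *\<^sub>R column_matrix j (real CARD('t) *\<^sub>R column j M)) = M"
    by (simp add: linear_cmul[OF linear_column_matrix] sum_column_matrix_columns)
  ultimately show ?thesis by simp
qed

definition data_matrix :: "(nat \<Rightarrow> real^'n) \<Rightarrow> ('t \<Rightarrow> nat) \<Rightarrow> real^'t^'n" where
  "data_matrix z col = (\<chi> r j. z (col j) $ r)"

lemma data_matrix_dynamics: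
  assumes "\<And>j. x (Suc (col j)) = A *v x (col j) + B *v u (col j) + d (col j)"
  shows "data_matrix (\<lambda>k. x (Suc k)) col
           = A ** data_matrix x col + B ** data_matrix u col + data_matrix d col"
  by (simp add: vec_eq_iff data_matrix_def matrix_matrix_mult_def matrix_vector_mult_def assms)

lemma closed_loop_from_data:
  fixes A :: "real^'n^'n" and B :: "real^'m^'n" and G :: "real^'n^'t"
  assumes "X1 = A ** X0 + B ** U0 + D" and "X0 ** G = mat 1"
  shows "(A + B ** (U0 ** G)) *v x = (X1 - D) *v (G *v x)"
proof -
  have "A *v x = A *v (X0 *v (G *v x))"
    by (simp add: matrix_vector_mul_assoc assms(2))
  then show ?thesis
    by (simp add: assms(1) matrix_vector_mult_add_rdistrib matrix_vector_mul_assoc[symmetric])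
qed

lemma robustly_invariantI:
  assumes "\<And>x w. x \<in> S \<Longrightarrow> w \<in> D \<Longrightarrow> F *v x + w \<in> S"
  shows "robustly_invariant F D S"
  unfolding robustly_invariant_def
proof (intro allI impI)
  fix x0 t and d :: "nat \<Rightarrow> _"
  assume "x0 \<in> S" and "\<forall>t. d t \<in> D"
  then show "traj F x0 d t \<in> S"
    by (induction t) (simp_all add: assms)
qed

theorem proposition1:
  fixes A :: "real^'n^'n" and B :: "real^'m^'n"
    and dv :: "'d::finite \<Rightarrow> real^'n"
    and Smat :: "real^'n^'s" and Umat :: "real^'m^'u"
    and ud :: "nat \<Rightarrow> real^'m" and xd :: "nat \<Rightarrow> real^'n" and dd :: "nat \<Rightarrow> real^'n"
    and col :: "'t::finite \<Rightarrow> nat"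
    and GK :: "real^'n^'t"
  defines "Dset \<equiv> {\<Sum>i\<in>UNIV. \<alpha> i *\<^sub>R dv i | \<alpha>. (\<forall>i. \<alpha> i \<ge> 0) \<and> sum \<alpha> UNIV = 1}"
    and "Sset \<equiv> {x. Smat *v x \<le> 1}"
    and "Uset \<equiv> {u. Umat *v u \<le> 1}"
    and "T \<equiv> CARD('t)"
    and "U0T \<equiv> (\<chi> r j. ud (col j) $ r) :: real^'t^'m"
    and "X0T \<equiv> (\<chi> r j. xd (col j) $ r) :: real^'t^'n"
    and "X1T \<equiv> (\<chi> r j. xd (Suc (col j)) $ r) :: real^'t^'n"
    and "\<delta> \<equiv> (\<lambda>j i. (\<chi> r j'. if j' = j then (real CARD('t) *\<^sub>R dv i) $ r else 0) :: real^'t^'n)"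
  assumes D_Cset: "C_set Dset"
    and D_vertices: "{w. w extreme_point_of Dset} = range dv"
    and S_Cset: "C_set Sset"
    and col_bij: "bij_betw col UNIV {..<T}"
    and dd_in: "\<And>k. k < T \<Longrightarrow> dd k \<in> Dset"
    and dyn: "\<And>k. k < T \<Longrightarrow> xd (Suc k) = A *v xd k + B *v ud k + dd k"
    and inv_cond: "\<And>s w j i. s extreme_point_of Sset \<Longrightarrow> w extreme_point_of Dset \<Longrightarrow>
                     Smat *v ((X1T - \<delta> j i) *v (GK *v s) + w) \<le> 1"
    and adm_cond: "\<And>s. s extreme_point_of Sset \<Longrightarrow> Umat *v (U0T *v (GK *v s)) \<le> 1"
    and id_cond: "mat 1 = X0T ** GK"
  shows "robustly_invariant (A + B ** (U0T ** GK)) Dset Sset \<and> admissible (U0T ** GK) Sset Uset"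
proof -
  define K where "K = U0T ** GK"
  define Dd where "Dd = data_matrix dd col"
  have S: "compact Sset" "convex Sset" and D: "compact Dset" "convex Dset"
    using S_Cset D_Cset by (auto simp: C_set_def)
  have col_lt: "col j < T" for j
    using col_bij by (auto simp: bij_betw_def)
  have "X1T = A ** X0T + B ** U0T + Dd"
    using data_matrix_dynamics[where x = xd and u = ud and d = dd, OF dyn[OF col_lt]]
    by (simp add: X1T_def X0T_def U0T_def Dd_def data_matrix_def)
  then have closed_loop: "(A + B ** K) *v x = (X1T - Dd) *v (GK *v x)" for x
    unfolding K_def using closed_loop_from_data id_cond by metis
  have "Dset = convex hull (range dv)"
    using Krein_Milman_Minkowski[OF D] D_vertices by simp
  then have Dd_hull: "Dd \<in> convex hull {column_matrix j (real CARD('t) *\<^sub>R v) | j v. v \<in> range dv}"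
    using dd_in[OF col_lt]
    by (intro matrix_in_convex_hull_column_matrices) (simp add: Dd_def data_matrix_def column_def)
  have step: "(A + B ** K) *v x + w \<in> Sset" if "x \<in> Sset" "w \<in> Dset" for x w
  proof -
    have "Smat *v ((X1T - Dd) *v (GK *v x) + w) \<le> 1"
      by (rule matrix_perturbation_le_from_vertices[OF S D _ Dd_hull that])
        (use inv_cond in \<open>auto simp: \<delta>_def column_matrix_def\<close>)
    then show ?thesis
      by (simp add: Sset_def closed_loop)
  qed
  have "admissible K Sset Uset"
    unfolding admissible_def Uset_def K_def
    using affine_le_if_le_on_extreme_points[OF S matrix_vector_mul_linear, of "Umat ** U0T ** GK" 0 1]
      adm_cond
    by (simp add: matrix_vector_mul_assoc matrix_mul_assoc)
  then show ?thesis
    using robustly_invariantI[OF step] unfolding K_def by blast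
qed

end
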